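(* For $\tau,t\in\mathbb{R}$ and integer $n\ge0$ let $$\mu_{2n}(\tau,t)=\int_{-\infty}^{\infty}x^{2n}\exp(-x^6+\tau x^4+tx^2)\,dx.$$ Then $$\frac{\partial^3\mu_{2n}}{\partial t^3}-\tfrac23\tau\frac{\partial^2\mu_{2n}}{\partial t^2}-\tfrac13t\frac{\partial\mu_{2n}}{\partial t}-\tfrac16(2n+1)\mu_{2n}=0.$$ *)

theory Defs
  imports "HOL-Analysis.Analysis"
begin

definition mu :: "nat \<Rightarrow> real \<Rightarrow> real \<Rightarrow> real" where
  "mu n \<tau> t = (LINT x|lborel. x ^ (2 * n) * exp (- (x ^ 6) + \<tau> * x ^ 4 + t * x ^ 2))"

end

(* Differentiation under the integral sign, justified by dominated convergence and a Gaussian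
   bound on the weight w(x) = exp(-x^6 + tau x^4 + t x^2), gives d/dt mu_2n = mu_(2n+2).
   The claimed equation, multiplied by 6, thus becomes
   (2n+1) mu_2n + 2t mu_(2n+2) + 4 tau mu_(2n+4) - 6 mu_(2n+6) = 0,
   which says that the integral of d/dx (x^(2n+1) w(x)) over the real line vanishes. *)
theory Submission
  imports Defs "HOL-Probability.Probability" "HOL-Real_Asymp.Real_Asymp"
begin

lemma bdd_above_range_if_filterlim_at_bot:
  fixes f :: "real \<Rightarrow> real"
  assumes "continuous_on UNIV f" "filterlim f at_bot at_top" "filterlim f at_bot at_bot"
  shows "bdd_above (range f)"
proof -
  have "eventually (\<lambda>x. f x \<le> 0) at_top" "eventually (\<lambda>x. f x \<le> 0) at_bot"
    using assms(2,3) by (simp_all add: filterlim_at_bot)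
  then obtain a b where a: "\<And>x. x \<ge> b \<Longrightarrow> f x \<le> 0" and b: "\<And>x. x \<le> a \<Longrightarrow> f x \<le> 0"
    unfolding eventually_at_top_linorder eventually_at_bot_linorder by blast
  have "bdd_above (f ` {a..b})"
    using assms(1) by (intro bounded_imp_bdd_above compact_imp_bounded compact_continuous_image)
      (auto intro: continuous_on_subset)
  moreover have "f x \<in> f ` {a..b} \<union> {..0}" for x
    using a[of x] b[of x] by (cases "x \<in> {a..b}") auto
  then have "range f \<subseteq> f ` {a..b} \<union> {..0}"
    by blast
  ultimately show ?thesis
    by (meson bdd_above_Un bdd_above_mono bdd_above_Iic)
qed

lemma integrable_moment_if_gaussian_bound:
  fixes f :: "real \<Rightarrow> real"
  assumes "f \<in> borel_measurable lborel" and bound: "\<And>x. \<bar>f x\<bar> \<le> C * exp (- (x^2) / 2)"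
  shows "integrable lborel (\<lambda>x. x ^ k * f x)"
proof (rule Bochner_Integration.integrable_bound)
  show "integrable lborel (\<lambda>x. C * sqrt (2 * pi) * (std_normal_density x * \<bar>x\<bar> ^ k))"
    by (intro integrable_mult_right integrable_std_normal_moment_abs)
  show "(\<lambda>x. x ^ k * f x) \<in> borel_measurable lborel"
    using assms(1) by measurable
  have "\<bar>x ^ k * f x\<bar> \<le> \<bar>x\<bar> ^ k * (C * exp (- (x^2) / 2))" for x
    unfolding abs_mult power_abs by (rule mult_left_mono[OF bound]) simp
  then show "AE x in lborel. norm (x ^ k * f x)
      \<le> norm (C * sqrt (2 * pi) * (std_normal_density x * \<bar>x\<bar> ^ k))"
    by (intro AE_I2) (simp add: std_normal_density_def mult_ac, meson abs_ge_self order_trans)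
qed

lemma has_real_derivative_lebesgue_integral:
  fixes f f' :: "real \<Rightarrow> 'a \<Rightarrow> real" and g :: "'a \<Rightarrow> real"
  assumes "r > 0"
    and f_deriv: "\<And>s x. s \<in> ball t r \<Longrightarrow> x \<in> space M \<Longrightarrow> ((\<lambda>s. f s x) has_real_derivative f' s x) (at s)"
    and f_int: "\<And>s. s \<in> ball t r \<Longrightarrow> integrable M (f s)"
    and f'_meas: "f' t \<in> borel_measurable M"
    and f'_bound: "\<And>s x. s \<in> ball t r \<Longrightarrow> x \<in> space M \<Longrightarrow> \<bar>f' s x\<bar> \<le> g x"
    and g_int: "integrable M g"
  shows "((\<lambda>s. LINT x|M. f s x) has_real_derivative (LINT x|M. f' t x)) (at t)"
proof -
  define D where "D s x = (f s x - f t x) / (s - t)" for s x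
  have t: "t \<in> ball t r" using \<open>r > 0\<close> by simp
  have lipschitz: "\<bar>f s x - f t x\<bar> \<le> g x * \<bar>s - t\<bar>" if "s \<in> ball t r" "x \<in> space M" for s x
    using field_differentiable_bound[of "ball t r" "\<lambda>s. f s x" "\<lambda>s. f' s x" "g x" s t]
      f_deriv f'_bound that t by (auto intro: has_field_derivative_at_within)
  have "((\<lambda>s. LINT x|M. D s x) \<longlongrightarrow> (LINT x|M. f' t x)) (at t within ball t r)"
  proof (unfold tendsto_at_iff_sequentially, intro allI impI)
    fix X :: "nat \<Rightarrow> real"
    assume X: "\<forall>i. X i \<in> ball t r - {t}" and "X \<longlonglongrightarrow> t"
    show "((\<lambda>s. LINT x|M. D s x) \<circ> X) \<longlonglongrightarrow> (LINT x|M. f' t x)"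
      unfolding comp_def
    proof (rule integral_dominated_convergence[where w = g])
      show "D (X i) \<in> borel_measurable M" for i
      proof -
        have "f (X i) \<in> borel_measurable M" "f t \<in> borel_measurable M"
          using f_int X t by auto
        then show ?thesis unfolding D_def by measurable
      qed
      show "AE x in M. (\<lambda>i. D (X i) x) \<longlonglongrightarrow> f' t x"
      proof (rule AE_I2)
        fix x assume "x \<in> space M"
        then have "((\<lambda>s. D s x) \<longlongrightarrow> f' t x) (at t)"
          using f_deriv[OF t] unfolding has_field_derivative_iff D_def by simp
        with X \<open>X \<longlonglongrightarrow> t\<close> show "(\<lambda>i. D (X i) x) \<longlonglongrightarrow> f' t x"
          unfolding tendsto_at_iff_sequentially comp_def by auto
      qed
      show "AE x in M. norm (D (X i) x) \<le> g x" for i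
        using lipschitz[of "X i"] X by (intro AE_I2) (auto simp: D_def abs_divide divide_le_eq)
    qed (fact f'_meas g_int)+
  qed
  moreover have "eventually (\<lambda>s. (LINT x|M. D s x) = ((LINT x|M. f s x) - (LINT x|M. f t x)) / (s - t))
      (at t within ball t r)"
    using f_int f_int[OF t] by (auto simp: eventually_at_filter D_def)
  moreover have "at t within ball t r = at t"
    by (rule at_within_open) (use t in auto)
  ultimately show ?thesis
    unfolding has_field_derivative_iff using tendsto_cong by force
qed

lemma lebesgue_integral_deriv_eq_0_if_vanishing_at_infinity:
  fixes F f :: "real \<Rightarrow> real"
  assumes "\<And>x. (F has_real_derivative f x) (at x)" and "\<And>x. isCont f x"
    and "integrable lborel f" and "(F \<longlongrightarrow> 0) at_top" and "(F \<longlongrightarrow> 0) at_bot"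
  shows "(LINT x|lborel. f x) = 0"
proof -
  have "(LBINT x=-\<infinity>..\<infinity>. f x) = 0 - 0"
    using assms
    by (intro interval_integral_FTC_integrable)
      (auto simp: has_real_derivative_iff_has_vector_derivative set_integrable_def ereal_tendsto_simps)
  then show ?thesis
    by (simp add: interval_lebesgue_integral_def set_lebesgue_integral_def)
qed

definition sextic_weight :: "real \<Rightarrow> real \<Rightarrow> real \<Rightarrow> real" where
  "sextic_weight \<tau> t x = exp (- (x ^ 6) + \<tau> * x ^ 4 + t * x ^ 2)"

lemma mu_eq_integral_sextic_weight:
  "mu n \<tau> t = (LINT x|lborel. x ^ (2 * n) * sextic_weight \<tau> t x)"
  by (simp add: mu_def sextic_weight_def)

lemma sextic_weight_pos: "0 < sextic_weight \<tau> t x"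
  by (simp add: sextic_weight_def)

lemma sextic_weight_mono:
  assumes "s \<le> t"
  shows "sextic_weight \<tau> s x \<le> sextic_weight \<tau> t x"
  using mult_right_mono[OF assms, of "x ^ 2"] by (simp add: sextic_weight_def)

lemma has_real_derivative_sextic_weight:
  "((\<lambda>t. sextic_weight \<tau> t x) has_real_derivative x ^ 2 * sextic_weight \<tau> t x) (at t)"
  unfolding sextic_weight_def by (auto intro!: derivative_eq_intros)

lemma sextic_weight_le_gaussian:
  fixes \<tau> t :: real
  obtains C where "\<And>x. sextic_weight \<tau> t x \<le> C * exp (- (x ^ 2) / 2)"
proof -
  define h where "h x = - (x ^ 6) + \<tau> * x ^ 4 + t * x ^ 2 + x ^ 2 / 2" for x :: real
  have "bdd_above (range h)"
  proof (rule bdd_above_range_if_filterlim_at_bot)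
    show "continuous_on UNIV h"
      unfolding h_def by (intro continuous_intros) auto
  qed (unfold h_def; real_asymp)+
  then obtain K where K: "\<And>x. h x \<le> K"
    by (auto simp: bdd_above_def)
  have "sextic_weight \<tau> t x = exp (h x) * exp (- (x ^ 2) / 2)" for x
    by (simp add: sextic_weight_def h_def flip: exp_add)
  then have "sextic_weight \<tau> t x \<le> exp K * exp (- (x ^ 2) / 2)" for x
    using K[of x] by simp
  then show thesis by (rule that)
qed

lemma integrable_moment_sextic_weight:
  "integrable lborel (\<lambda>x. x ^ k * sextic_weight \<tau> t x)"
proof -
  obtain C where "\<And>x. sextic_weight \<tau> t x \<le> C * exp (- (x ^ 2) / 2)"
    using sextic_weight_le_gaussian[of \<tau> t] by blast
  then show ?thesis
    by (intro integrable_moment_if_gaussian_bound)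
      (auto simp: sextic_weight_def)
qed

lemma has_real_derivative_mu: "(mu n \<tau> has_real_derivative mu (Suc n) \<tau> t) (at t)"
  unfolding mu_eq_integral_sextic_weight
proof (rule has_real_derivative_lebesgue_integral
    [where r = 1 and g = "\<lambda>x. x ^ (2 * Suc n) * sextic_weight \<tau> (t + 1) x"])
  show "((\<lambda>s. x ^ (2 * n) * sextic_weight \<tau> s x)
      has_real_derivative x ^ (2 * Suc n) * sextic_weight \<tau> s x) (at s)" for s x
    by (rule DERIV_cong[OF DERIV_cmult[OF has_real_derivative_sextic_weight]])
      (simp add: power_add power2_eq_square mult_ac)
  show "\<bar>x ^ (2 * Suc n) * sextic_weight \<tau> s x\<bar> \<le> x ^ (2 * Suc n) * sextic_weight \<tau> (t + 1) x"
    if "s \<in> ball t 1" for s x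
  proof -
    have "0 \<le> x ^ (2 * Suc n)"
      unfolding power_mult by (rule zero_le_power) simp
    moreover have "sextic_weight \<tau> s x \<le> sextic_weight \<tau> (t + 1) x"
      using that by (intro sextic_weight_mono) (simp add: dist_real_def)
    ultimately show ?thesis
      by (simp only: abs_mult abs_of_nonneg abs_of_pos[OF sextic_weight_pos] mult_left_mono)
  qed
  show "(\<lambda>x. x ^ (2 * Suc n) * sextic_weight \<tau> t x) \<in> borel_measurable lborel"
    unfolding sextic_weight_def by measurable
qed (rule integrable_moment_sextic_weight | simp)+

lemma deriv_funpow_mu: "(deriv ^^ k) (mu n \<tau>) = mu (n + k) \<tau>"
proof (induction k)
  case (Suc k)
  then show ?case
    by (simp add: DERIV_imp_deriv[OF has_real_derivative_mu])
qed simp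

lemma mu_recurrence:
  "(2 * real n + 1) * mu n \<tau> t + 2 * t * mu (n + 1) \<tau> t + 4 * \<tau> * mu (n + 2) \<tau> t
     - 6 * mu (n + 3) \<tau> t = 0"
proof -
  define w where "w = sextic_weight \<tau> t"
  define f where "f x = (2 * real n + 1) * (x ^ (2 * n) * w x) + 2 * t * (x ^ (2 * (n + 1)) * w x)
    + 4 * \<tau> * (x ^ (2 * (n + 2)) * w x) - 6 * (x ^ (2 * (n + 3)) * w x)" for x
  have int: "integrable lborel (\<lambda>x. x ^ k * w x)" for k
    unfolding w_def by (rule integrable_moment_sextic_weight)
  have "((\<lambda>x. x ^ (2 * n + 1) * w x) has_real_derivative f x) (at x)" for x
  proof (rule DERIV_cong[OF DERIV_mult[OF DERIV_pow]])
    show "(w has_real_derivative (- 6 * x ^ 5 + 4 * \<tau> * x ^ 3 + 2 * t * x) * w x) (at x)"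
      unfolding w_def sextic_weight_def by (auto intro!: derivative_eq_intros)
    have pow: "x ^ (2 * n + 1) = x ^ (2 * n) * x" "x ^ (2 * (n + 1)) = x ^ (2 * n) * x ^ 2"
      "x ^ (2 * (n + 2)) = x ^ (2 * n) * x ^ 4" "x ^ (2 * (n + 3)) = x ^ (2 * n) * x ^ 6"
      by (simp_all add: power_add power2_eq_square eval_nat_numeral)
    show "real (2 * n + 1) * x ^ (2 * n + 1 - Suc 0) * w x
        + (- 6 * x ^ 5 + 4 * \<tau> * x ^ 3 + 2 * t * x) * w x * x ^ (2 * n + 1) = f x"
      unfolding f_def pow by (simp add: algebra_simps eval_nat_numeral)
  qed
  moreover have "isCont f x" for x
    unfolding f_def w_def sextic_weight_def by (intro continuous_intros)
  moreover have "integrable lborel f"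
    unfolding f_def by (intro Bochner_Integration.integrable_add Bochner_Integration.integrable_diff
      integrable_mult_right int)
  moreover have "((\<lambda>x. x ^ (2 * n + 1) * w x) \<longlongrightarrow> 0) at_top"
    "((\<lambda>x. x ^ (2 * n + 1) * w x) \<longlongrightarrow> 0) at_bot"
    unfolding w_def sextic_weight_def by real_asymp+
  ultimately have "(LINT x|lborel. f x) = 0"
    by (rule lebesgue_integral_deriv_eq_0_if_vanishing_at_infinity)
  moreover have "(LINT x|lborel. f x) = (2 * real n + 1) * mu n \<tau> t + 2 * t * mu (n + 1) \<tau> t
      + 4 * \<tau> * mu (n + 2) \<tau> t - 6 * mu (n + 3) \<tau> t"
    unfolding f_def mu_eq_integral_sextic_weight w_def[symmetric]
    by (simp only: Bochner_Integration.integral_add Bochner_Integration.integral_diff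
      integral_mult_right_zero int Bochner_Integration.integrable_add
      Bochner_Integration.integrable_diff integrable_mult_right)
  ultimately show ?thesis by simp
qed

theorem lemma5p5:
  fixes n :: nat and \<tau> t :: real
  shows "(deriv ^^ 3) (mu n \<tau>) t - 2 / 3 * \<tau> * (deriv ^^ 2) (mu n \<tau>) t
          - 1 / 3 * t * deriv (mu n \<tau>) t - 1 / 6 * (2 * real n + 1) * mu n \<tau> t = 0"
  using mu_recurrence[of n \<tau> t] deriv_funpow_mu[of 1 n \<tau>]
  by (simp add: deriv_funpow_mu)

end
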